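(* As formal power series in $x,y$, $$F(x,y) = \frac{x}{y}\left(\frac{G(y)}{1-F(x,y)} - \frac{G(0)}{1-F(x,0)}\right),$$ where the bracket on the right-hand side vanishes at $y=0$ so the division by $y$ is legitimate. Moreover this equation determines $F$ uniquely.
   Context: Let $\mu$ be a probability law on $\{0,1,2,\dots\}$, $\mu_k=\mu(\{k\})$, $G(t)=\sum_k\mu_kt^k$. Parking rule on a finite rooted tree with car arrival numbers $(a_x)$ at its vertices: each vertex holds at most one car; each car goes to its arrival vertex, parks there if free, otherwise drives towards the root and parks at the first free vertex on its way, and exits through the root if none is found (the final configuration does not depend on the order of the cars). A fully parked tree is a finite rooted plane tree $\mathbf t$ together with nonnegative integers $(a_x)_{x\in\mathbf t}$ (car arrivals) such that in the final configuration every vertex is occupied; its number of outgoing cars is the number of cars exiting through the root. Let $\mathbb T_n^{(k)}$ be the set of fully parked trees with $n$ vertices and $k$ outgoing cars, $w(\mathbf t)=\prod_{x\in\mathbf t}\mu_{a_x}$, and $F(x,y)=\sum_{n\ge1}\sum_{k\ge0}\sum_{\mathbf t\in\mathbb T_n^{(k)}} w(\mathbf t)x^ny^k.$ *)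

theory Defs
  imports "HOL-Computational_Algebra.Formal_Power_Series"
begin

text \<open>Finite rooted plane trees decorated with car arrival numbers:
  Node a ts is a vertex with a cars arriving at it and ordered list of subtrees ts.\<close>
datatype ptree = Node nat "ptree list"

fun psize :: "ptree \<Rightarrow> nat" where
  "psize (Node a ts) = Suc (sum_list (map psize ts))"

fun outflow :: "ptree \<Rightarrow> nat" where
  "outflow (Node a ts) = (a + sum_list (map outflow ts)) - 1"

fun fully_parked :: "ptree \<Rightarrow> bool" where
  "fully_parked (Node a ts) =
     ((\<forall>t\<in>set ts. fully_parked t) \<and> 1 \<le> a + sum_list (map outflow ts))"

fun pweight :: "(nat \<Rightarrow> real) \<Rightarrow> ptree \<Rightarrow> real" where
  "pweight \<mu> (Node a ts) = \<mu> a * prod_list (map (pweight \<mu>) ts)"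

text \<open>Bivariate series in R[[y]][[x]]: outer variable x, inner variable y.\<close>
definition Fser :: "(nat \<Rightarrow> real) \<Rightarrow> real fps fps" where
  "Fser \<mu> = Abs_fps (\<lambda>n. Abs_fps (\<lambda>k.
      \<Sum>t\<in>{t. fully_parked t \<and> psize t = n \<and> outflow t = k}. pweight \<mu> t))"

definition at_y0 :: "real fps fps \<Rightarrow> real fps fps" where
  "at_y0 H = Abs_fps (\<lambda>n. fps_const (fps_nth (fps_nth H n) 0))"

definition Gy :: "(nat \<Rightarrow> real) \<Rightarrow> real fps fps" where
  "Gy \<mu> = fps_const (Abs_fps \<mu>)"

definition G0 :: "(nat \<Rightarrow> real) \<Rightarrow> real fps fps" where
  "G0 \<mu> = fps_const (fps_const (\<mu> 0))"

definition Yv :: "real fps fps" where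
  "Yv = fps_const fps_X"

definition bracket :: "(nat \<Rightarrow> real) \<Rightarrow> real fps fps \<Rightarrow> real fps fps" where
  "bracket \<mu> H = Gy \<mu> * inverse (1 - H) - G0 \<mu> * inverse (1 - at_y0 H)"

text \<open>The functional equation, with the division by y cleared (y * H = x * bracket).\<close>
definition parking_eq :: "(nat \<Rightarrow> real) \<Rightarrow> real fps fps \<Rightarrow> bool" where
  "parking_eq \<mu> H \<longleftrightarrow>
     Yv * H = fps_X * bracket \<mu> H"

end

(*
  Removing the root of a fully parked tree leaves a forest of fully parked trees. If a cars
  arrive at the root and the forest lets m cars out, the root is occupied iff a + m >= 1, and
  then a + m - 1 cars leave the tree. With L_n(y) the weighted series of forests with n
  vertices, counted by outgoing cars, this gives y F_{n+1}(y) = G(y) L_n(y) - G(0) L_n(0),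
  the subtracted term removing the configurations a = m = 0 in which the root stays empty.
  Forests are finite sequences of trees, so L = 1/(1 - F) and L(x,0) = 1/(1 - F(x,0)), which
  turns the recursion into the functional equation; in particular the bracket equals y F / x
  and vanishes at y = 0.

  Uniqueness: the coefficient of x^m of the bracket depends only on the coefficients of
  x^0, ..., x^m of its argument (the inverse of a power series is computed coefficient by
  coefficient), so the equation determines the coefficients of F one power of x at a time.
*)
theory Submission
  imports Defs
begin

unbundle fps_syntax

definition parked_trees :: "nat \<Rightarrow> nat \<Rightarrow> ptree set" where
  "parked_trees n k = {t. fully_parked t \<and> psize t = n \<and> outflow t = k}"

definition parked_forests :: "nat \<Rightarrow> nat \<Rightarrow> ptree list set" where
  "parked_forests n k = {ts. (\<forall>t\<in>set ts. fully_parked t) \<and>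
     sum_list (map psize ts) = n \<and> sum_list (map outflow ts) = k}"

definition forest_weight :: "(nat \<Rightarrow> real) \<Rightarrow> ptree list \<Rightarrow> real" where
  "forest_weight \<mu> ts = prod_list (map (pweight \<mu>) ts)"

definition forest_series :: "(nat \<Rightarrow> real) \<Rightarrow> real fps fps" where
  "forest_series \<mu> = Abs_fps (\<lambda>n. Abs_fps (\<lambda>k.
      \<Sum>ts\<in>parked_forests n k. forest_weight \<mu> ts))"

lemma psize_pos: "0 < psize t"
  by (cases t) simp

lemma length_le_sum_list_psize: "length ts \<le> sum_list (map psize ts)"
proof (induction ts)
  case (Cons t ts)
  then show ?case
    using psize_pos[of t] by simp
qed simp

lemma forests_bounded_subset_lists:
  assumes "\<forall>t\<in>set ts. fully_parked t"
    and "sum_list (map psize ts) \<le> n" and "sum_list (map outflow ts) \<le> k"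
  shows "set ts \<subseteq> {t. fully_parked t \<and> psize t \<le> n \<and> outflow t \<le> k} \<and> length ts \<le> n"
proof -
  have "psize t \<le> n \<and> outflow t \<le> k" if "t \<in> set ts" for t
    using that assms(2,3) member_le_sum_list[of "psize t" "map psize ts"]
      member_le_sum_list[of "outflow t" "map outflow ts"] by force
  then show ?thesis
    using assms length_le_sum_list_psize[of ts] by auto
qed

lemma finite_fully_parked_bounded:
  "finite {t. fully_parked t \<and> psize t \<le> n \<and> outflow t \<le> k}"
proof (induction n arbitrary: k)
  case 0
  then show ?case
    using psize_pos by (simp add: not_less[symmetric])
next
  case (Suc n)
  let ?S = "{t. fully_parked t \<and> psize t \<le> n \<and> outflow t \<le> Suc k}"
  have "{t. fully_parked t \<and> psize t \<le> Suc n \<and> outflow t \<le> k}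
      \<subseteq> case_prod Node ` ({..Suc k} \<times> {ts. set ts \<subseteq> ?S \<and> length ts \<le> n})"
  proof
    fix t assume t_in: "t \<in> {t. fully_parked t \<and> psize t \<le> Suc n \<and> outflow t \<le> k}"
    obtain a ts where t: "t = Node a ts"
      by (cases t)
    from t_in have parked: "\<forall>u\<in>set ts. fully_parked u" and size: "sum_list (map psize ts) \<le> n"
      by (simp_all add: t)
    from t_in have cars: "a + sum_list (map outflow ts) \<le> Suc k"
      by (simp add: t) arith
    have "set ts \<subseteq> ?S \<and> length ts \<le> n"
      using parked size cars by (intro forests_bounded_subset_lists) simp_all
    moreover have "a \<le> Suc k"
      using cars by simp
    ultimately show "t \<in> case_prod Node ` ({..Suc k} \<times> {ts. set ts \<subseteq> ?S \<and> length ts \<le> n})"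
      unfolding t by (intro image_eqI[where x = "(a, ts)"]) simp_all
  qed
  moreover have "finite ({..Suc k} \<times> {ts. set ts \<subseteq> ?S \<and> length ts \<le> n})"
    using Suc.IH by (intro finite_cartesian_product finite_lists_length_le) auto
  ultimately show ?case
    by (rule finite_subset[OF _ finite_imageI])
qed

lemma finite_parked_trees: "finite (parked_trees n k)"
  unfolding parked_trees_def
  by (rule finite_subset[OF _ finite_fully_parked_bounded[of n k]]) auto

lemma finite_parked_forests: "finite (parked_forests n k)"
proof (rule finite_subset)
  show "parked_forests n k \<subseteq>
      {ts. set ts \<subseteq> {t. fully_parked t \<and> psize t \<le> n \<and> outflow t \<le> k} \<and> length ts \<le> n}"
    unfolding parked_forests_def by (auto dest!: forests_bounded_subset_lists[of _ n k])
  show "finite \<dots>"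
    by (intro finite_lists_length_le finite_fully_parked_bounded)
qed

lemma parked_trees_0: "parked_trees 0 k = {}"
  using psize_pos by (auto simp: parked_trees_def)

lemma parked_trees_Suc:
  "parked_trees (Suc n) k = case_prod Node ` (SIGMA a:{0..Suc k}. parked_forests n (Suc k - a))"
proof (intro equalityI subsetI)
  fix t assume t_in: "t \<in> parked_trees (Suc n) k"
  obtain a ts where t: "t = Node a ts"
    by (cases t)
  from t_in have "a \<le> Suc k" "ts \<in> parked_forests n (Suc k - a)"
    by (auto simp: t parked_trees_def parked_forests_def)
  then show "t \<in> case_prod Node ` (SIGMA a:{0..Suc k}. parked_forests n (Suc k - a))"
    unfolding t by (intro image_eqI[where x = "(a, ts)"]) simp_all
qed (auto simp: parked_trees_def parked_forests_def)

lemma sum_parked_trees_Suc: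
  "(\<Sum>t\<in>parked_trees (Suc n) k. pweight \<mu> t)
     = (\<Sum>a=0..Suc k. \<mu> a * (\<Sum>ts\<in>parked_forests n (Suc k - a). forest_weight \<mu> ts))"
proof -
  have "inj_on (case_prod Node) (SIGMA a:{0..Suc k}. parked_forests n (Suc k - a))"
    by (auto simp: inj_on_def)
  then have "(\<Sum>t\<in>parked_trees (Suc n) k. pweight \<mu> t)
      = (\<Sum>(a, ts)\<in>(SIGMA a:{0..Suc k}. parked_forests n (Suc k - a)). \<mu> a * forest_weight \<mu> ts)"
    by (simp add: parked_trees_Suc sum.reindex case_prod_unfold forest_weight_def)
  also have "\<dots> = (\<Sum>a=0..Suc k. \<mu> a * (\<Sum>ts\<in>parked_forests n (Suc k - a). forest_weight \<mu> ts))"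
    by (simp add: sum.Sigma[symmetric] finite_parked_forests sum_distrib_left)
  finally show ?thesis .
qed

lemma parked_forests_Cons:
  "parked_forests n k - {[]} = (\<lambda>(_, t, ts). t # ts) `
     (SIGMA (i, j):{0..n} \<times> {0..k}. parked_trees i j \<times> parked_forests (n - i) (k - j))"
proof (intro equalityI subsetI)
  fix ts assume ts_in: "ts \<in> parked_forests n k - {[]}"
  then obtain t ts' where ts: "ts = t # ts'"
    by (cases ts) auto
  from ts_in have "((psize t, outflow t), t, ts') \<in>
      (SIGMA (i, j):{0..n} \<times> {0..k}. parked_trees i j \<times> parked_forests (n - i) (k - j))"
    by (auto simp: ts parked_trees_def parked_forests_def)
  then show "ts \<in> (\<lambda>(_, t, ts). t # ts) `
      (SIGMA (i, j):{0..n} \<times> {0..k}. parked_trees i j \<times> parked_forests (n - i) (k - j))"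
    unfolding ts by (rule rev_image_eqI) simp
qed (auto simp: parked_trees_def parked_forests_def)

lemma Nil_in_parked_forests_iff: "[] \<in> parked_forests n k \<longleftrightarrow> n = 0 \<and> k = 0"
  by (auto simp: parked_forests_def)

lemma sum_parked_forests:
  "(\<Sum>ts\<in>parked_forests n k. forest_weight \<mu> ts)
     = (if n = 0 \<and> k = 0 then 1 else 0) + (\<Sum>i=0..n. \<Sum>j=0..k.
         (\<Sum>t\<in>parked_trees i j. pweight \<mu> t) * (\<Sum>ts\<in>parked_forests (n - i) (k - j). forest_weight \<mu> ts))"
proof -
  let ?I = "SIGMA (i, j):{0..n} \<times> {0..k}. parked_trees i j \<times> parked_forests (n - i) (k - j)"
  have "inj_on (\<lambda>(_, t, ts). t # ts) ?I"
    by (auto simp: inj_on_def parked_trees_def)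
  then have "(\<Sum>ts\<in>parked_forests n k - {[]}. forest_weight \<mu> ts)
      = (\<Sum>((i, j), t, ts)\<in>?I. pweight \<mu> t * forest_weight \<mu> ts)"
    by (simp add: parked_forests_Cons sum.reindex case_prod_unfold forest_weight_def)
  also have "\<dots> = (\<Sum>(i, j)\<in>{0..n} \<times> {0..k}.
      \<Sum>(t, ts)\<in>parked_trees i j \<times> parked_forests (n - i) (k - j). pweight \<mu> t * forest_weight \<mu> ts)"
    by (simp add: sum.Sigma finite_parked_trees finite_parked_forests split_def)
  also have "\<dots> = (\<Sum>(i, j)\<in>{0..n} \<times> {0..k}.
      (\<Sum>t\<in>parked_trees i j. pweight \<mu> t) * (\<Sum>ts\<in>parked_forests (n - i) (k - j). forest_weight \<mu> ts))"
    by (simp add: sum_product sum.cartesian_product split_def)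
  also have "\<dots> = (\<Sum>i=0..n. \<Sum>j=0..k.
      (\<Sum>t\<in>parked_trees i j. pweight \<mu> t) * (\<Sum>ts\<in>parked_forests (n - i) (k - j). forest_weight \<mu> ts))"
    by (simp add: sum.cartesian_product)
  moreover have "(\<Sum>ts\<in>parked_forests n k. forest_weight \<mu> ts)
      = (if n = 0 \<and> k = 0 then 1 else 0) + (\<Sum>ts\<in>parked_forests n k - {[]}. forest_weight \<mu> ts)"
    by (simp add: sum_diff1 finite_parked_forests Nil_in_parked_forests_iff forest_weight_def)
  ultimately show ?thesis
    by simp
qed

lemma Fser_nth_nth: "Fser \<mu> $ n $ k = (\<Sum>t\<in>parked_trees n k. pweight \<mu> t)"
  by (simp add: Fser_def parked_trees_def)

lemma forest_series_nth_nth: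
  "forest_series \<mu> $ n $ k = (\<Sum>ts\<in>parked_forests n k. forest_weight \<mu> ts)"
  by (simp add: forest_series_def)

lemma Fser_nth_0: "Fser \<mu> $ 0 = 0"
  by (rule fps_ext) (simp add: Fser_nth_nth parked_trees_0)

lemma Fser_nth_Suc:
  "fps_X * Fser \<mu> $ Suc n
     = Abs_fps \<mu> * forest_series \<mu> $ n - fps_const (\<mu> 0 * forest_series \<mu> $ n $ 0)"
proof (rule fps_ext)
  fix k
  show "(fps_X * Fser \<mu> $ Suc n) $ k
      = (Abs_fps \<mu> * forest_series \<mu> $ n - fps_const (\<mu> 0 * forest_series \<mu> $ n $ 0)) $ k"
  proof (cases k)
    case (Suc j)
    have "(Abs_fps \<mu> * forest_series \<mu> $ n) $ Suc j
        = (\<Sum>a=0..Suc j. \<mu> a * forest_series \<mu> $ n $ (Suc j - a))"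
      by (simp add: fps_mult_nth)
    then show ?thesis
      by (simp add: Suc Fser_nth_nth forest_series_nth_nth sum_parked_trees_Suc)
  qed simp
qed

lemma forest_series_eq: "forest_series \<mu> = 1 + Fser \<mu> * forest_series \<mu>"
proof (intro fps_ext)
  fix n k
  show "forest_series \<mu> $ n $ k = (1 + Fser \<mu> * forest_series \<mu>) $ n $ k"
    by (subst forest_series_nth_nth, subst sum_parked_forests)
      (simp add: fps_mult_nth fps_sum_nth Fser_nth_nth forest_series_nth_nth)
qed

lemma fps_inverse_unique_comm_ring1:
  fixes f g :: "'a::{comm_ring_1,inverse} fps"
  assumes "f $ 0 = 1" and "inverse (1::'a) = 1" and "f * g = 1"
  shows "inverse f = g"
proof -
  have "g $ 0 = 1"
    using fps_mult_nth_0[of f g] assms by simp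
  then have "fps_right_inverse f 1 = g"
    using fps_lr_inverse_unique_ring1(2)[of f g] assms by simp
  then show ?thesis
    using assms by (simp add: fps_inverse_def)
qed

lemma one_minus_Fser_mult_forest_series: "(1 - Fser \<mu>) * forest_series \<mu> = 1"
proof -
  have "(1 - Fser \<mu>) * forest_series \<mu> = forest_series \<mu> - Fser \<mu> * forest_series \<mu>"
    by (simp add: algebra_simps)
  also have "\<dots> = 1"
    using forest_series_eq[of \<mu>] by (metis add_diff_cancel_right')
  finally show ?thesis .
qed

lemma inverse_one_minus_Fser: "inverse (1 - Fser \<mu>) = forest_series \<mu>"
  by (rule fps_inverse_unique_comm_ring1) (simp_all add: Fser_nth_0 one_minus_Fser_mult_forest_series)

lemma at_y0_nth: "at_y0 H $ n = fps_const (H $ n $ 0)"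
  by (simp add: at_y0_def)

lemma at_y0_one: "at_y0 1 = 1"
  by (rule fps_ext) (simp add: at_y0_nth)

lemma at_y0_diff: "at_y0 (A - B) = at_y0 A - at_y0 B"
  by (rule fps_ext) (simp add: at_y0_nth)

lemma at_y0_mult: "at_y0 (A * B) = at_y0 A * at_y0 B"
  by (intro fps_ext) (simp add: at_y0_nth fps_mult_nth fps_sum_nth)

lemma inverse_one_minus_at_y0_Fser: "inverse (1 - at_y0 (Fser \<mu>)) = at_y0 (forest_series \<mu>)"
proof (rule fps_inverse_unique_comm_ring1)
  show "(1 - at_y0 (Fser \<mu>)) * at_y0 (forest_series \<mu>) = 1"
    using one_minus_Fser_mult_forest_series[of \<mu>]
    by (metis at_y0_diff at_y0_mult at_y0_one)
qed (simp_all add: at_y0_nth Fser_nth_0)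

lemma bracket_Fser_nth: "bracket \<mu> (Fser \<mu>) $ n = fps_X * Fser \<mu> $ Suc n"
  by (simp add: Fser_nth_Suc bracket_def inverse_one_minus_Fser inverse_one_minus_at_y0_Fser
      Gy_def G0_def at_y0_nth)

lemma at_y0_bracket_Fser: "at_y0 (bracket \<mu> (Fser \<mu>)) = 0"
  by (rule fps_ext) (simp add: at_y0_nth bracket_Fser_nth)

lemma parking_eq_Fser: "parking_eq \<mu> (Fser \<mu>)"
  unfolding parking_eq_def Yv_def
  by (rule fps_ext) (simp add: bracket_Fser_nth Fser_nth_0)

lemma fps_cutoff_mult: "fps_cutoff n (f * g) = fps_cutoff n (fps_cutoff n f * fps_cutoff n g)"
  by (simp add: fps_cutoff_eq_fps_cutoff_iff fps_cutoff_left_mult_nth fps_cutoff_right_mult_nth)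

lemma fps_cutoff_inverse_cutoff:
  fixes f :: "'a::{comm_monoid_add,inverse,times,uminus} fps"
  shows "fps_cutoff n (inverse (fps_cutoff n f)) = fps_cutoff n (inverse f)"
  unfolding fps_cutoff_eq_fps_cutoff_iff
proof (intro allI impI)
  fix k assume "k < n"
  then have "fps_right_inverse_constructor (fps_cutoff n f) c k = fps_right_inverse_constructor f c k"
    for c
    by (intro fps_right_inverse_constructor_cong) simp
  moreover from \<open>k < n\<close> have "fps_cutoff n f $ 0 = f $ 0"
    by simp
  ultimately show "inverse (fps_cutoff n f) $ k = inverse f $ k"
    by (simp add: fps_inverse_def)
qed

lemma fps_cutoff_at_y0: "fps_cutoff n (at_y0 H) = at_y0 (fps_cutoff n H)"
  by (rule fps_ext) (simp add: at_y0_nth)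

definition causal :: "('a::zero fps \<Rightarrow> 'b::zero fps) \<Rightarrow> bool" where
  "causal \<Phi> \<longleftrightarrow>
     (\<forall>n f g. fps_cutoff n f = fps_cutoff n g \<longrightarrow> fps_cutoff n (\<Phi> f) = fps_cutoff n (\<Phi> g))"

lemma causalI:
  "(\<And>n f g. fps_cutoff n f = fps_cutoff n g \<Longrightarrow> fps_cutoff n (\<Phi> f) = fps_cutoff n (\<Phi> g))
     \<Longrightarrow> causal \<Phi>"
  unfolding causal_def by blast

lemma causalD:
  "causal \<Phi> \<Longrightarrow> fps_cutoff n f = fps_cutoff n g \<Longrightarrow> fps_cutoff n (\<Phi> f) = fps_cutoff n (\<Phi> g)"
  unfolding causal_def by blast

lemma causal_ident: "causal (\<lambda>f. f)"
  by (rule causalI)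

lemma causal_const: "causal (\<lambda>_. c)"
  by (rule causalI) (rule refl)

lemma causal_diff:
  fixes \<Phi> \<Psi> :: "'a::zero fps \<Rightarrow> 'b::group_add fps"
  assumes "causal \<Phi>" and "causal \<Psi>"
  shows "causal (\<lambda>f. \<Phi> f - \<Psi> f)"
proof (rule causalI)
  fix n and f g :: "'a fps" assume eq: "fps_cutoff n f = fps_cutoff n g"
  show "fps_cutoff n (\<Phi> f - \<Psi> f) = fps_cutoff n (\<Phi> g - \<Psi> g)"
    using causalD[OF assms(1) eq] causalD[OF assms(2) eq] by (simp add: fps_cutoff_diff)
qed

lemma causal_mult:
  fixes \<Phi> \<Psi> :: "'a::zero fps \<Rightarrow> 'b::comm_semiring_0 fps"
  assumes "causal \<Phi>" and "causal \<Psi>"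
  shows "causal (\<lambda>f. \<Phi> f * \<Psi> f)"
proof (rule causalI)
  fix n and f g :: "'a fps" assume eq: "fps_cutoff n f = fps_cutoff n g"
  have "fps_cutoff n (\<Phi> f * \<Psi> f) = fps_cutoff n (fps_cutoff n (\<Phi> f) * fps_cutoff n (\<Psi> f))"
    by (rule fps_cutoff_mult)
  also have "\<dots> = fps_cutoff n (fps_cutoff n (\<Phi> g) * fps_cutoff n (\<Psi> g))"
    by (simp only: causalD[OF assms(1) eq] causalD[OF assms(2) eq])
  also have "\<dots> = fps_cutoff n (\<Phi> g * \<Psi> g)"
    by (rule fps_cutoff_mult[symmetric])
  finally show "fps_cutoff n (\<Phi> f * \<Psi> f) = fps_cutoff n (\<Phi> g * \<Psi> g)" .
qed

lemma causal_inverse: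
  fixes \<Phi> :: "'a::zero fps \<Rightarrow> 'b::{comm_monoid_add,inverse,times,uminus} fps"
  assumes "causal \<Phi>"
  shows "causal (\<lambda>f. inverse (\<Phi> f))"
proof (rule causalI)
  fix n and f g :: "'a fps" assume eq: "fps_cutoff n f = fps_cutoff n g"
  have "fps_cutoff n (inverse (\<Phi> f)) = fps_cutoff n (inverse (fps_cutoff n (\<Phi> f)))"
    by (rule fps_cutoff_inverse_cutoff[symmetric])
  also have "\<dots> = fps_cutoff n (inverse (fps_cutoff n (\<Phi> g)))"
    by (simp only: causalD[OF assms eq])
  also have "\<dots> = fps_cutoff n (inverse (\<Phi> g))"
    by (rule fps_cutoff_inverse_cutoff)
  finally show "fps_cutoff n (inverse (\<Phi> f)) = fps_cutoff n (inverse (\<Phi> g))" .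
qed

lemma causal_at_y0:
  assumes "causal \<Phi>"
  shows "causal (\<lambda>f. at_y0 (\<Phi> f))"
proof (rule causalI)
  fix n and f g :: "'a fps" assume eq: "fps_cutoff n f = fps_cutoff n g"
  show "fps_cutoff n (at_y0 (\<Phi> f)) = fps_cutoff n (at_y0 (\<Phi> g))"
    using causalD[OF assms eq] by (simp add: fps_cutoff_at_y0)
qed

lemma causal_bracket: "causal (bracket \<mu>)"
  unfolding bracket_def [abs_def]
  by (intro causal_diff causal_mult causal_inverse causal_at_y0 causal_const causal_ident)

lemma causal_fixpoint_unique:
  fixes \<Phi> :: "'a::idom fps \<Rightarrow> 'a fps"
  assumes "causal \<Phi>" and "c \<noteq> 0"
    and f: "fps_const c * f = fps_X * \<Phi> f" and g: "fps_const c * g = fps_X * \<Phi> g"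
  shows "f = g"
proof -
  have cutoff_eq: "fps_cutoff n f = fps_cutoff n g" for n
  proof (induction n)
    case (Suc n)
    have "(fps_X * \<Phi> f) $ n = (fps_X * \<Phi> g) $ n"
      using causalD[OF assms(1) Suc.IH] by (simp add: fps_cutoff_eq_fps_cutoff_iff)
    then have "c * f $ n = c * g $ n"
      using arg_cong[OF f, of "\<lambda>h. h $ n"] arg_cong[OF g, of "\<lambda>h. h $ n"] by simp
    then have "f $ n = g $ n"
      using \<open>c \<noteq> 0\<close> by simp
    with Suc.IH show ?case
      by (simp add: fps_cutoff_eq_fps_cutoff_iff less_Suc_eq)
  qed simp
  show "f = g"
  proof (rule fps_ext)
    fix n
    show "f $ n = g $ n"
      using arg_cong[OF cutoff_eq[of "Suc n"], of "\<lambda>h. h $ n"] by simp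
  qed
qed

theorem mainTheorem5:
  fixes \<mu> :: "nat \<Rightarrow> real"
  assumes "\<And>k. 0 \<le> \<mu> k" and "\<mu> sums 1"
  shows "at_y0 (bracket \<mu> (Fser \<mu>)) = 0 \<and> parking_eq \<mu> (Fser \<mu>) \<and> (\<forall>H. parking_eq \<mu> H \<longrightarrow> H = Fser \<mu>)"
proof (intro conjI allI impI)
  show "at_y0 (bracket \<mu> (Fser \<mu>)) = 0"
    by (rule at_y0_bracket_Fser)
  show "parking_eq \<mu> (Fser \<mu>)"
    by (rule parking_eq_Fser)
  fix H
  assume "parking_eq \<mu> H"
  then show "H = Fser \<mu>"
    using parking_eq_Fser[of \<mu>] unfolding parking_eq_def Yv_def
    by (rule causal_fixpoint_unique[OF causal_bracket fps_X_neq_zero])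
qed

end
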